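(* Let $k\ge 1$ be an integer and let $r_0,\dots,r_k$ be distinct integers. Then there is an integer $M\ge 1$ such that, for each $\xi\in\mathbb{R}$, there exists at least one index $i\in\{0,1,\dots,k\}$ with $r_i\neq\xi$ for which the point $\xi_i=1/(M(\xi-r_i))$ satisfies \[ \omega^{\mathrm{lead}}_k(\xi_i)=\omega_k(\xi_i)=\omega_k(\xi). \]
   Context: For a polynomial $P\in\mathbb{Z}[x]$, $\|P\|$ denotes the largest absolute value of its coefficients, and $c_k(P)$ denotes the coefficient of $x^k$ in $P$. For $\xi\in\mathbb{R}$ and an integer $n\ge 1$, $\omega_n(\xi)$ is the supremum of all $\omega\in\mathbb{R}$ for which there exist infinitely many non-zero polynomials $P\in\mathbb{Z}[x]$ of degree at most $n$ with $|P(\xi)|\le\|P\|^{-\omega}$. The quantity $\omega^{\mathrm{lead}}_k(\xi)$ is defined in the same way as $\omega_k(\xi)$, except that one restricts to non-zero polynomials $P\in\mathbb{Z}[x]$ of degree at most $k$ satisfying $|c_k(P)|=\|P\|$. *)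

theory Defs
  imports "HOL-Analysis.Analysis" "HOL-Computational_Algebra.Polynomial"
begin

definition hgt :: "int poly \<Rightarrow> int" where
  "hgt P = Max {\<bar>coeff P i\<bar> | i. i \<le> degree P}"

definition ipoly :: "int poly \<Rightarrow> real \<Rightarrow> real" where
  "ipoly P x = poly (map_poly real_of_int P) x"

definition omega :: "nat \<Rightarrow> real \<Rightarrow> ereal" where
  "omega n \<xi> = Sup (ereal ` {w :: real. infinite {P :: int poly. P \<noteq> 0 \<and> degree P \<le> n \<and>
      \<bar>ipoly P \<xi>\<bar> \<le> (real_of_int (hgt P)) powr (- w)}})"

definition omega_lead :: "nat \<Rightarrow> real \<Rightarrow> ereal" where
  "omega_lead k \<xi> = Sup (ereal ` {w :: real. infinite {P :: int poly. P \<noteq> 0 \<and> degree P \<le> k \<and>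
      \<bar>coeff P k\<bar> = hgt P \<and>
      \<bar>ipoly P \<xi>\<bar> \<le> (real_of_int (hgt P)) powr (- w)}})"

end

theory Submission
  imports Defs
begin

(* By Lagrange interpolation at the k + 1 distinct nodes r_i there is c > 0 such that every
   integer polynomial P of degree at most k satisfies |P(r_i)| >= c H(P) at some node.  Sorting
   the good approximations of xi by such a node, one node r_i <> xi carries the full exponent
   omega_k(xi).  For those P the polynomial Q(x) = (M x)^k P(r_i + 1/(M x)) has value
   P(xi)/(xi - r_i)^k at xi_i = 1/(M (xi - r_i)), height comparable to H(P), and leading
   coefficient M^k P(r_i), which dominates all other coefficients as soon as M c exceeds a bound
   for the Taylor coefficients of P at the nodes.  This gives
   omega_k(xi) <= omega_lead_k(xi_i) <= omega_k(xi_i), and the inverse transformation gives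
   omega_k(xi_i) <= omega_k(xi). *)

lemma ipoly_add [simp]: "ipoly (P + Q) x = ipoly P x + ipoly Q x"
proof -
  have "map_poly real_of_int (P + Q) = map_poly real_of_int P + map_poly real_of_int Q"
    by (rule poly_eqI) (simp add: coeff_map_poly)
  then show ?thesis by (simp add: ipoly_def)
qed

lemma ipoly_mult [simp]: "ipoly (P * Q) x = ipoly P x * ipoly Q x"
proof -
  have "map_poly real_of_int (P * Q) = map_poly real_of_int P * map_poly real_of_int Q"
    by (rule poly_eqI) (simp add: coeff_map_poly coeff_mult)
  then show ?thesis by (simp add: ipoly_def)
qed

lemma ipoly_smult [simp]: "ipoly (smult c P) x = real_of_int c * ipoly P x"
  by (simp add: ipoly_def map_poly_smult)

lemma ipoly_pCons [simp]: "ipoly (pCons a P) x = real_of_int a + x * ipoly P x"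
  by (simp add: ipoly_def map_poly_pCons)

lemma ipoly_0 [simp]: "ipoly 0 x = 0"
  by (simp add: ipoly_def)

lemma ipoly_1 [simp]: "ipoly 1 x = 1"
  by (simp add: ipoly_def)

lemma ipoly_power [simp]: "ipoly (P ^ n) x = ipoly P x ^ n"
  by (induction n) simp_all

lemma ipoly_sum [simp]: "ipoly (\<Sum>i\<in>I. P i) x = (\<Sum>i\<in>I. ipoly (P i) x)"
  by (induction I rule: infinite_finite_induct) simp_all

lemma ipoly_pcompose [simp]: "ipoly (pcompose P Q) x = ipoly P (ipoly Q x)"
  by (induction P) (simp_all add: pcompose_pCons)

lemma ipoly_of_int: "ipoly P (real_of_int x) = real_of_int (poly P x)"
  by (induction P) simp_all

lemma ipoly_altdef:
  assumes "degree P \<le> n"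
  shows "ipoly P x = (\<Sum>i\<le>n. real_of_int (coeff P i) * x ^ i)"
proof -
  have "ipoly P x = (\<Sum>i\<le>degree P. real_of_int (coeff P i) * x ^ i)"
    by (simp add: ipoly_def poly_altdef coeff_map_poly degree_map_poly)
  also have "\<dots> = (\<Sum>i\<le>n. real_of_int (coeff P i) * x ^ i)"
    by (rule sum.mono_neutral_left) (use assms in \<open>auto simp: coeff_eq_0\<close>)
  finally show ?thesis .
qed

lemma int_poly_eqI:
  assumes "\<And>x. x \<noteq> a \<Longrightarrow> ipoly P x = ipoly Q x"
  shows "P = Q"
proof -
  let ?R = "map_poly real_of_int P - map_poly real_of_int Q"
  have "poly ([:-a, 1:] * ?R) x = poly 0 x" for x
    using assms[of x, unfolded ipoly_def] by (cases "x = a") simp_all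
  then have "[:-a, 1:] * ?R = 0" by (simp only: poly_eq_poly_eq_iff[symmetric]) (rule ext)
  then have "?R = 0" by (metis mult_eq_0_iff pCons_eq_0_iff zero_neq_one)
  then show ?thesis
    by (metis coeff_map_poly of_int_0 of_int_eq_iff poly_eqI right_minus_eq)
qed

lemma hgt_eq_Max: "hgt P = Max ((\<lambda>i. \<bar>coeff P i\<bar>) ` {..degree P})"
  unfolding hgt_def by (rule arg_cong[where f = Max]) auto

lemma abs_coeff_le_hgt: "\<bar>coeff P i\<bar> \<le> hgt P"
proof (cases "i \<le> degree P")
  case True
  then show ?thesis unfolding hgt_eq_Max by (intro Max_ge) auto
next
  case False
  then have "coeff P i = 0" by (simp add: coeff_eq_0)
  moreover have "\<bar>coeff P 0\<bar> \<le> hgt P" unfolding hgt_eq_Max by (intro Max_ge) auto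
  ultimately show ?thesis by simp
qed

lemma hgt_nonneg: "0 \<le> hgt P"
  using abs_coeff_le_hgt[of P 0] by linarith

lemma hgt_attained: obtains i where "hgt P = \<bar>coeff P i\<bar>"
proof -
  have "hgt P \<in> (\<lambda>i. \<bar>coeff P i\<bar>) ` {..degree P}"
    unfolding hgt_eq_Max by (intro Max_in) auto
  then show ?thesis using that by blast
qed

lemma hgt_le: "(\<And>i. \<bar>coeff P i\<bar> \<le> B) \<Longrightarrow> hgt P \<le> B"
  by (metis hgt_attained)

lemma hgt_0 [simp]: "hgt 0 = 0"
  by (simp add: hgt_def)

lemma hgt_1 [simp]: "hgt 1 = 1"
  by (simp add: hgt_def)

lemma hgt_ge_1: "P \<noteq> 0 \<Longrightarrow> 1 \<le> hgt P"
proof -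
  assume "P \<noteq> 0"
  then have "coeff P (degree P) \<noteq> 0" by simp
  then show ?thesis using abs_coeff_le_hgt[of P "degree P"] by linarith
qed

lemma hgt_add_le: "hgt (P + Q) \<le> hgt P + hgt Q"
proof (rule hgt_le)
  fix i
  have "\<bar>coeff P i + coeff Q i\<bar> \<le> \<bar>coeff P i\<bar> + \<bar>coeff Q i\<bar>" by (rule abs_triangle_ineq)
  then show "\<bar>coeff (P + Q) i\<bar> \<le> hgt P + hgt Q"
    using abs_coeff_le_hgt[of P i] abs_coeff_le_hgt[of Q i] by simp
qed

lemma hgt_sum_le: "hgt (\<Sum>i\<in>I. P i) \<le> (\<Sum>i\<in>I. hgt (P i))"
  by (induction I rule: infinite_finite_induct) (simp_all add: order_trans[OF hgt_add_le])

lemma hgt_smult [simp]: "hgt (smult c P) = \<bar>c\<bar> * hgt P"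
proof (rule antisym)
  show "hgt (smult c P) \<le> \<bar>c\<bar> * hgt P"
    by (rule hgt_le) (simp add: abs_mult abs_coeff_le_hgt mult_left_mono)
  obtain i where "hgt P = \<bar>coeff P i\<bar>" by (rule hgt_attained)
  then show "\<bar>c\<bar> * hgt P \<le> hgt (smult c P)"
    using abs_coeff_le_hgt[of "smult c P" i] by (simp add: abs_mult)
qed

lemma pcompose_monom: "pcompose (monom c n) Q = smult c (Q ^ n)"
  by (induction n) (simp_all add: monom_altdef pcompose_smult pcompose_mult pcompose_pCons)

lemma hgt_pcompose_le:
  assumes "degree P \<le> n"
  shows "hgt (pcompose P Q) \<le> hgt P * (\<Sum>j\<le>n. hgt (Q ^ j))"
proof -
  have "pcompose P Q = (\<Sum>j\<le>n. smult (coeff P j) (Q ^ j))"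
    by (subst poly_as_sum_of_monoms'[OF assms, symmetric]) (simp add: pcompose_sum pcompose_monom)
  then have "hgt (pcompose P Q) \<le> (\<Sum>j\<le>n. \<bar>coeff P j\<bar> * hgt (Q ^ j))"
    using hgt_sum_le[of "\<lambda>j. smult (coeff P j) (Q ^ j)" "{..n}"] by simp
  also have "\<dots> \<le> (\<Sum>j\<le>n. hgt P * hgt (Q ^ j))"
    by (intro sum_mono mult_right_mono abs_coeff_le_hgt hgt_nonneg)
  finally show ?thesis by (simp add: sum_distrib_left)
qed

lemma finite_hgt_le: "finite {P :: int poly. degree P \<le> n \<and> real_of_int (hgt P) \<le> B}"
proof -
  let ?C = "PiE {..n} (\<lambda>_. {-\<lfloor>B\<rfloor>..\<lfloor>B\<rfloor>})"
  have "{P. degree P \<le> n \<and> real_of_int (hgt P) \<le> B} \<subseteq> (\<lambda>c. \<Sum>i\<le>n. monom (c i) i) ` ?C"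
  proof
    fix P :: "int poly" assume P: "P \<in> {P. degree P \<le> n \<and> real_of_int (hgt P) \<le> B}"
    then have "\<bar>coeff P i\<bar> \<le> \<lfloor>B\<rfloor>" for i
      using abs_coeff_le_hgt[of P i] by (simp add: le_floor_iff) linarith
    then have "restrict (coeff P) {..n} \<in> ?C" by (force simp: abs_le_iff)
    moreover have "P = (\<Sum>i\<le>n. monom (restrict (coeff P) {..n} i) i)"
      using poly_as_sum_of_monoms'[of P n] P by simp
    ultimately show "P \<in> (\<lambda>c. \<Sum>i\<le>n. monom (c i) i) ` ?C" by blast
  qed
  moreover have "finite ?C" by (rule finite_PiE) auto
  ultimately show ?thesis by (meson finite_imageI finite_subset)
qed

section \<open>Lagrange interpolation\<close>

definition lagrange_basis :: "real set \<Rightarrow> real \<Rightarrow> real poly" where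
  "lagrange_basis T t = smult (1 / (\<Prod>s\<in>T - {t}. t - s)) (\<Prod>s\<in>T - {t}. [:-s, 1:])"

lemma degree_lagrange_basis:
  assumes "finite T" "t \<in> T"
  shows "degree (lagrange_basis T t) < card T"
proof -
  have "degree (lagrange_basis T t) \<le> degree (\<Prod>s\<in>T - {t}. [:-s, 1:])"
    unfolding lagrange_basis_def by (rule degree_smult_le)
  also have "\<dots> \<le> sum (degree \<circ> (\<lambda>s. [:-s, 1:])) (T - {t})"
    by (rule degree_prod_sum_le) (use assms in auto)
  also have "\<dots> < card T"
    using assms by simp (metis card_gt_0_iff diff_Suc_less empty_iff)
  finally show ?thesis .
qed

lemma poly_lagrange_basis:
  assumes "finite T" "t \<in> T" "u \<in> T"
  shows "poly (lagrange_basis T t) u = (if u = t then 1 else 0)"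
proof (cases "u = t")
  case True
  have "(\<Prod>s\<in>T - {t}. t - s) \<noteq> 0" using assms by (auto simp: prod_zero_iff)
  then show ?thesis using True by (simp add: lagrange_basis_def poly_prod)
next
  case False
  have "(\<Prod>s\<in>T - {t}. poly [:-s, 1:] u) = 0"
    using assms False by (auto simp: prod_zero_iff intro!: bexI[of _ u])
  then show ?thesis using False by (simp add: lagrange_basis_def poly_prod)
qed

lemma lagrange_interpolation:
  assumes "finite T" "degree p < card T"
  shows "p = (\<Sum>t\<in>T. smult (poly p t) (lagrange_basis T t))"
proof (rule poly_eqI_degree[of T])
  fix u assume "u \<in> T"
  then show "poly p u = poly (\<Sum>t\<in>T. smult (poly p t) (lagrange_basis T t)) u"
    using assms(1) by (simp add: poly_sum poly_lagrange_basis if_distrib cong: if_cong)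
next
  show "degree p < card T" by (fact assms(2))
next
  show "degree (\<Sum>t\<in>T. smult (poly p t) (lagrange_basis T t)) < card T"
    using assms
    by (intro degree_sum_less) (auto intro: le_less_trans[OF degree_smult_le] degree_lagrange_basis)
qed

lemma coeff_bounded_by_values:
  assumes "finite T"
  obtains C :: real where "C > 0"
    "\<And>p j. degree p < card T \<Longrightarrow> \<bar>coeff p j\<bar> \<le> C * (\<Sum>t\<in>T. \<bar>poly p t\<bar>)"
proof
  define C where "C = 1 + (\<Sum>t\<in>T. \<Sum>i<card T. \<bar>coeff (lagrange_basis T t) i\<bar>)"
  show "C > 0" unfolding C_def by (smt (verit) sum_nonneg abs_ge_zero)
  have C_ge: "\<bar>coeff (lagrange_basis T t) j\<bar> \<le> C" if "t \<in> T" for t j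
  proof (cases "j < card T")
    case True
    have "\<bar>coeff (lagrange_basis T t) j\<bar> \<le> (\<Sum>i<card T. \<bar>coeff (lagrange_basis T t) i\<bar>)"
      using True by (intro member_le_sum) auto
    also have "\<dots> \<le> (\<Sum>t\<in>T. \<Sum>i<card T. \<bar>coeff (lagrange_basis T t) i\<bar>)"
      using that assms by (intro member_le_sum sum_nonneg) auto
    finally show ?thesis unfolding C_def by simp
  next
    case False
    then have "coeff (lagrange_basis T t) j = 0"
      using degree_lagrange_basis[OF assms that] by (intro coeff_eq_0) simp
    then show ?thesis using \<open>C > 0\<close> by simp
  qed
  fix p :: "real poly" and j assume deg: "degree p < card T"
  have "coeff p j = (\<Sum>t\<in>T. poly p t * coeff (lagrange_basis T t) j)"
    by (subst lagrange_interpolation[OF assms deg]) (simp add: coeff_sum)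
  also have "\<bar>\<dots>\<bar> \<le> (\<Sum>t\<in>T. \<bar>poly p t\<bar> * C)"
    by (rule order_trans[OF sum_abs sum_mono]) (auto simp: abs_mult intro: mult_left_mono C_ge)
  finally show "\<bar>coeff p j\<bar> \<le> C * (\<Sum>t\<in>T. \<bar>poly p t\<bar>)"
    by (simp add: sum_distrib_left mult.commute)
qed

lemma exists_node_large_value:
  assumes "finite T" "T \<noteq> {}"
  obtains c :: real where "c > 0"
    "\<And>P. degree P < card T \<Longrightarrow> \<exists>t\<in>T. c * hgt P \<le> \<bar>ipoly P t\<bar>"
proof -
  obtain C where "C > 0"
    and C: "\<And>p j. degree p < card T \<Longrightarrow> \<bar>coeff p j\<bar> \<le> C * (\<Sum>t\<in>T. \<bar>poly p t\<bar>)"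
    using coeff_bounded_by_values[OF assms(1)] by blast
  define c where "c = 1 / (C * card T)"
  have "card T > 0" using assms by (simp add: card_gt_0_iff)
  then have "c > 0" using \<open>C > 0\<close> by (simp add: c_def)
  moreover have "\<exists>t\<in>T. c * hgt P \<le> \<bar>ipoly P t\<bar>" if deg: "degree P < card T" for P
  proof (rule ccontr)
    assume "\<not> ?thesis"
    then have small: "\<bar>ipoly P t\<bar> < c * hgt P" if "t \<in> T" for t
      using that by force
    obtain j where "hgt P = \<bar>coeff P j\<bar>" by (rule hgt_attained)
    then have "real_of_int (hgt P) \<le> C * (\<Sum>t\<in>T. \<bar>ipoly P t\<bar>)"
      using C[of "map_poly real_of_int P" j] deg
      by (simp add: coeff_map_poly degree_map_poly ipoly_def)
    also have "\<dots> < C * (\<Sum>t\<in>T. c * hgt P)"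
      using \<open>C > 0\<close> assms small by (intro mult_strict_left_mono sum_strict_mono) auto
    also have "\<dots> = hgt P" using \<open>C > 0\<close> \<open>card T > 0\<close> by (simp add: c_def)
    finally show False by simp
  qed
  ultimately show thesis using that by blast
qed

section \<open>Approximation exponents of families of polynomials\<close>

definition polys_upto :: "nat \<Rightarrow> int poly set" where
  "polys_upto n = {P. P \<noteq> 0 \<and> degree P \<le> n}"

definition approx_polys :: "int poly set \<Rightarrow> real \<Rightarrow> real \<Rightarrow> int poly set" where
  "approx_polys A \<xi> w = {P \<in> A. \<bar>ipoly P \<xi>\<bar> \<le> real_of_int (hgt P) powr - w}"

definition approx_exponent :: "int poly set \<Rightarrow> real \<Rightarrow> ereal" where
  "approx_exponent A \<xi> = Sup (ereal ` {w. infinite (approx_polys A \<xi> w)})"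

lemma omega_eq_approx_exponent: "omega n \<xi> = approx_exponent (polys_upto n) \<xi>"
  by (simp add: omega_def approx_exponent_def approx_polys_def polys_upto_def conj_assoc)

lemma omega_lead_eq_approx_exponent:
  "omega_lead k \<xi> = approx_exponent {P \<in> polys_upto k. \<bar>coeff P k\<bar> = hgt P} \<xi>"
  by (simp add: omega_lead_def approx_exponent_def approx_polys_def polys_upto_def conj_assoc)

lemma approx_polys_mono: "A \<subseteq> B \<Longrightarrow> approx_polys A \<xi> w \<subseteq> approx_polys B \<xi> w"
  by (auto simp: approx_polys_def)

lemma approx_polys_Un: "approx_polys (A \<union> B) \<xi> w = approx_polys A \<xi> w \<union> approx_polys B \<xi> w"
  by (auto simp: approx_polys_def)

lemma approx_exponent_mono:
  assumes "A \<subseteq> B"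
  shows "approx_exponent A \<xi> \<le> approx_exponent B \<xi>"
proof -
  have "approx_polys A \<xi> w \<subseteq> approx_polys B \<xi> w" for w
    using assms by (rule approx_polys_mono)
  then show ?thesis unfolding approx_exponent_def
    by (intro Sup_subset_mono image_mono) (auto dest: finite_subset)
qed

lemma omega_lead_le_omega: "omega_lead k \<xi> \<le> omega k \<xi>"
  unfolding omega_lead_eq_approx_exponent omega_eq_approx_exponent
  by (rule approx_exponent_mono) blast

lemma approx_exponent_ge:
  "infinite (approx_polys A \<xi> w) \<Longrightarrow> ereal w \<le> approx_exponent A \<xi>"
  unfolding approx_exponent_def by (auto intro: Sup_upper)

lemma approx_exponent_le_0:
  assumes "\<And>w. 0 \<le> w \<Longrightarrow> finite (approx_polys A \<xi> w)"
  shows "approx_exponent A \<xi> \<le> 0"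
  unfolding approx_exponent_def
proof (rule Sup_least)
  fix x assume "x \<in> ereal ` {w. infinite (approx_polys A \<xi> w)}"
  then obtain w where "x = ereal w" "w < 0" using assms by force
  then show "x \<le> 0" by simp
qed

lemma approx_exponent_Un:
  "approx_exponent (A \<union> B) \<xi> = max (approx_exponent A \<xi>) (approx_exponent B \<xi>)"
proof -
  have "{w. infinite (approx_polys (A \<union> B) \<xi> w)} =
      {w. infinite (approx_polys A \<xi> w)} \<union> {w. infinite (approx_polys B \<xi> w)}"
    by (auto simp: approx_polys_Un)
  then show ?thesis
    by (simp add: approx_exponent_def image_Un Sup_union_distrib sup_max)
qed

lemma approx_exponent_UN:
  assumes "finite I" "I \<noteq> {}"
  shows "\<exists>i\<in>I. approx_exponent (\<Union>i\<in>I. A i) \<xi> = approx_exponent (A i) \<xi>"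
  using assms
proof (induction I rule: finite_ne_induct)
  case (insert j I)
  then obtain i where "i \<in> I" "approx_exponent (\<Union>i\<in>I. A i) \<xi> = approx_exponent (A i) \<xi>"
    by blast
  then show ?case by (auto simp: approx_exponent_Un max_def)
qed simp

lemma approx_exponent_le_by_density:
  assumes "\<And>w w'. w' < w \<Longrightarrow> infinite (approx_polys A \<xi> w) \<Longrightarrow> infinite (approx_polys B \<eta> w')"
  shows "approx_exponent A \<xi> \<le> approx_exponent B \<eta>"
  unfolding approx_exponent_def[of A]
proof (rule Sup_least)
  fix x assume "x \<in> ereal ` {w. infinite (approx_polys A \<xi> w)}"
  then obtain w where w: "infinite (approx_polys A \<xi> w)" and x: "x = ereal w" by blast
  show "x \<le> approx_exponent B \<eta>"
    unfolding x
  proof (rule dense_le)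
    fix y assume y: "y < ereal w"
    show "y \<le> approx_exponent B \<eta>"
    proof (cases y)
      case (real w')
      then show ?thesis using assms[OF _ w] y approx_exponent_ge by simp
    qed (use y in simp_all)
  qed
qed

lemma powr_neg_le_of_comparable:
  fixes a b x y w :: real
  assumes "0 < a" "0 < x" "a * x \<le> y" "y \<le> b * x"
  shows "x powr - w \<le> max (a powr w) (b powr w) * y powr - w"
proof -
  have "0 < y" using assms by (smt (verit) mult_pos_pos)
  have "x powr - w = (y / x) powr w * y powr - w"
    using \<open>0 < x\<close> \<open>0 < y\<close> by (simp add: powr_divide powr_minus field_simps)
  also have "(y / x) powr w \<le> max (a powr w) (b powr w)"
  proof (cases "0 \<le> w")
    case True
    have "y / x \<le> b" using assms by (simp add: divide_le_eq)
    then show ?thesis using True \<open>0 < x\<close> \<open>0 < y\<close> by (simp add: powr_mono2 le_max_iff_disj)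
  next
    case False
    have "a \<le> y / x" using assms by (simp add: le_divide_eq)
    then show ?thesis using False \<open>0 < a\<close> by (simp add: powr_mono2' le_max_iff_disj)
  qed
  finally show ?thesis by (simp add: mult_right_mono)
qed

lemma mult_powr_neg_le:
  fixes C H w w' :: real
  assumes "w' < w" "0 < H" "C powr (1 / (w - w')) \<le> H"
  shows "C * H powr - w \<le> H powr - w'"
proof (cases "C \<le> 0")
  case True
  then show ?thesis by (smt (verit) mult_nonpos_nonneg powr_ge_zero)
next
  case False
  have "C = (C powr (1 / (w - w'))) powr (w - w')"
    using False assms(1) by (simp add: powr_powr)
  also have "\<dots> \<le> H powr (w - w')"
    using assms by (intro powr_mono2) auto
  finally have "C * H powr - w \<le> H powr (w - w') * H powr - w"
    by (simp add: mult_right_mono)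
  also have "\<dots> = H powr - w'"
    using assms(2) by (simp flip: powr_add)
  finally show ?thesis .
qed

text \<open>Only finitely many \<open>Q\<close> have height at most \<open>R\<close>; above \<open>R\<close> the constant \<open>K L\<close> is
  absorbed by lowering the exponent from \<open>w\<close> to \<open>w'\<close>.\<close>

lemma infinite_approx_polys_transfer:
  fixes f :: "int poly \<Rightarrow> int poly"
  assumes inj: "inj_on f A" and maps: "f ` A \<subseteq> B" and B: "B \<subseteq> polys_upto n"
    and hgt: "\<And>P. P \<in> A \<Longrightarrow> real_of_int (hgt P) powr - w \<le> L * real_of_int (hgt (f P)) powr - w"
    and val: "\<And>P. P \<in> A \<Longrightarrow> \<bar>ipoly (f P) \<eta>\<bar> \<le> K * \<bar>ipoly P \<xi>\<bar>"
    and "0 \<le> K" "w' < w" and inf: "infinite (approx_polys A \<xi> w)"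
  shows "infinite (approx_polys B \<eta> w')"
proof -
  define R where "R = (K * L) powr (1 / (w - w'))"
  have "f ` approx_polys A \<xi> w \<subseteq>
      approx_polys B \<eta> w' \<union> {Q. degree Q \<le> n \<and> real_of_int (hgt Q) \<le> R}"
  proof
    fix Q assume "Q \<in> f ` approx_polys A \<xi> w"
    then obtain P where P: "P \<in> A" "\<bar>ipoly P \<xi>\<bar> \<le> real_of_int (hgt P) powr - w" and Q: "Q = f P"
      by (auto simp: approx_polys_def)
    have "Q \<in> B" using maps P Q by blast
    then have "Q \<noteq> 0" "degree Q \<le> n" using B by (auto simp: polys_upto_def)
    show "Q \<in> approx_polys B \<eta> w' \<union> {Q. degree Q \<le> n \<and> real_of_int (hgt Q) \<le> R}"
    proof (cases "real_of_int (hgt Q) \<le> R")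
      case False
      have "\<bar>ipoly Q \<eta>\<bar> \<le> K * (real_of_int (hgt P) powr - w)"
        using val[OF P(1)] P(2) \<open>0 \<le> K\<close> Q by (smt (verit) mult_left_mono)
      also have "\<dots> \<le> K * L * real_of_int (hgt Q) powr - w"
        using hgt[OF P(1)] \<open>0 \<le> K\<close> Q by (simp add: mult_left_mono mult.assoc)
      also have "\<dots> \<le> real_of_int (hgt Q) powr - w'"
        using False \<open>w' < w\<close> hgt_ge_1[OF \<open>Q \<noteq> 0\<close>] by (intro mult_powr_neg_le) (auto simp: R_def)
      finally show ?thesis using \<open>Q \<in> B\<close> by (simp add: approx_polys_def)
    qed (use \<open>degree Q \<le> n\<close> in simp)
  qed
  moreover have "inj_on f (approx_polys A \<xi> w)"
    using inj by (rule inj_on_subset) (auto simp: approx_polys_def)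
  then have "infinite (f ` approx_polys A \<xi> w)"
    using inf finite_imageD by blast
  ultimately show ?thesis
    using finite_hgt_le[of n R] by (meson finite_Un finite_subset)
qed

lemma approx_exponent_le_transfer:
  fixes f :: "int poly \<Rightarrow> int poly" and a b K :: real
  assumes inj: "inj_on f A" and maps: "f ` A \<subseteq> B" and A: "A \<subseteq> polys_upto n" and B: "B \<subseteq> polys_upto n"
    and "0 < a" and hgt: "\<And>P. P \<in> A \<Longrightarrow> a * hgt P \<le> hgt (f P) \<and> hgt (f P) \<le> b * hgt P"
    and "0 \<le> K" and val: "\<And>P. P \<in> A \<Longrightarrow> \<bar>ipoly (f P) \<eta>\<bar> \<le> K * \<bar>ipoly P \<xi>\<bar>"
  shows "approx_exponent A \<xi> \<le> approx_exponent B \<eta>"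
proof (rule approx_exponent_le_by_density)
  fix w w' :: real
  have "real_of_int (hgt P) powr - w \<le> max (a powr w) (b powr w) * real_of_int (hgt (f P)) powr - w"
    if "P \<in> A" for P
  proof (rule powr_neg_le_of_comparable)
    show "0 < real_of_int (hgt P)"
      using A that hgt_ge_1[of P] by (force simp: polys_upto_def)
  qed (use \<open>0 < a\<close> hgt[OF that] in auto)
  then show "w' < w \<Longrightarrow> infinite (approx_polys A \<xi> w) \<Longrightarrow> infinite (approx_polys B \<eta> w')"
    by (rule infinite_approx_polys_transfer[OF inj maps B _ val \<open>0 \<le> K\<close>])
qed

lemma infinite_approx_polys_0:
  assumes "1 \<le> n"
  shows "infinite (approx_polys (polys_upto n) \<xi> 0)"
proof -
  define g where "g q = [:- round (real q * \<xi>), int q:]" for q :: nat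
  have "inj g" by (rule injI) (simp add: g_def)
  have "g q \<in> approx_polys (polys_upto n) \<xi> 0" if "q \<ge> 1" for q
  proof -
    have "g q \<noteq> 0" "degree (g q) \<le> n" using that assms by (auto simp: g_def)
    have "\<bar>ipoly (g q) \<xi>\<bar> = \<bar>of_int (round (real q * \<xi>)) - real q * \<xi>\<bar>"
      by (simp add: g_def abs_minus_commute mult.commute)
    also have "\<dots> \<le> 1" using of_int_round_abs_le[of "real q * \<xi>"] by simp
    also have "\<dots> = real_of_int (hgt (g q)) powr - 0"
      using hgt_ge_1[OF \<open>g q \<noteq> 0\<close>] by simp
    finally show ?thesis
      using \<open>g q \<noteq> 0\<close> \<open>degree (g q) \<le> n\<close> by (simp add: approx_polys_def polys_upto_def)
  qed
  then have "g ` {1..} \<subseteq> approx_polys (polys_upto n) \<xi> 0" by auto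
  moreover have "infinite (g ` {1..})"
    using \<open>inj g\<close> by (metis finite_imageD infinite_Ici inj_on_subset subset_UNIV)
  ultimately show ?thesis using infinite_super by blast
qed

definition polys_large_at :: "real \<Rightarrow> real \<Rightarrow> nat \<Rightarrow> int poly set" where
  "polys_large_at c t n = {P \<in> polys_upto n. c * hgt P \<le> \<bar>ipoly P t\<bar>}"

lemma finite_approx_polys_large_at_self:
  assumes "0 < c" "0 \<le> w"
  shows "finite (approx_polys (polys_large_at c \<xi> n) \<xi> w)"
proof -
  have "approx_polys (polys_large_at c \<xi> n) \<xi> w \<subseteq> {P. degree P \<le> n \<and> real_of_int (hgt P) \<le> 1 / c}"
  proof
    fix P assume "P \<in> approx_polys (polys_large_at c \<xi> n) \<xi> w"
    then have P: "P \<noteq> 0" "degree P \<le> n" "c * hgt P \<le> \<bar>ipoly P \<xi>\<bar>"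
      and approx: "\<bar>ipoly P \<xi>\<bar> \<le> real_of_int (hgt P) powr - w"
      by (auto simp: approx_polys_def polys_large_at_def polys_upto_def)
    have "real_of_int (hgt P) powr - w \<le> 1"
      using hgt_ge_1[OF P(1)] assms(2) by (simp add: powr_minus inverse_le_1_iff ge_one_powr_ge_zero)
    then have "c * hgt P \<le> 1" using P(3) approx by linarith
    then show "P \<in> {P. degree P \<le> n \<and> real_of_int (hgt P) \<le> 1 / c}"
      using P(2) assms(1) by (simp add: field_simps)
  qed
  then show ?thesis using finite_hgt_le finite_subset by blast
qed

text \<open>Polynomials that are large at \<open>\<xi>\<close> itself approximate \<open>\<xi>\<close> only with exponent \<open>\<le> 0\<close>,
  whereas \<open>\<omega>\<^sub>n(\<xi>) \<ge> 0\<close>; so nodes equal to \<open>\<xi>\<close> can be discarded.\<close>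

lemma exists_node_omega_le_approx_exponent:
  fixes t :: "'i \<Rightarrow> real" and c :: real
  assumes "1 \<le> n" "finite I" "0 < c"
    and cover: "\<And>P. P \<in> polys_upto n \<Longrightarrow> \<exists>i\<in>I. c * hgt P \<le> \<bar>ipoly P (t i)\<bar>"
  shows "\<exists>i\<in>I. t i \<noteq> \<xi> \<and> omega n \<xi> \<le> approx_exponent (polys_large_at c (t i) n) \<xi>"
proof -
  define G where "G = {i \<in> I. t i \<noteq> \<xi>}"
  define A where "A = (\<Union>i\<in>G. polys_large_at c (t i) n)"
  have split: "polys_upto n \<subseteq> A \<union> polys_large_at c \<xi> n"
  proof
    fix P assume "P \<in> polys_upto n"
    moreover obtain i where "i \<in> I" "c * hgt P \<le> \<bar>ipoly P (t i)\<bar>"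
      using cover[OF \<open>P \<in> polys_upto n\<close>] by blast
    ultimately show "P \<in> A \<union> polys_large_at c \<xi> n"
      by (cases "t i = \<xi>") (auto simp: A_def G_def polys_large_at_def)
  qed
  have "infinite (approx_polys A \<xi> 0)"
  proof
    assume "finite (approx_polys A \<xi> 0)"
    moreover have "finite (approx_polys (polys_large_at c \<xi> n) \<xi> 0)"
      using \<open>0 < c\<close> by (rule finite_approx_polys_large_at_self) simp
    ultimately have "finite (approx_polys (polys_upto n) \<xi> 0)"
      using approx_polys_mono[OF split] by (metis approx_polys_Un finite_Un finite_subset)
    then show False using infinite_approx_polys_0[OF \<open>1 \<le> n\<close>] by contradiction
  qed
  then have "G \<noteq> {}" and A_nonneg: "0 \<le> approx_exponent A \<xi>"
    using approx_exponent_ge[of A \<xi> 0] by (auto simp: A_def approx_polys_def zero_ereal_def)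
  have "approx_exponent (polys_large_at c \<xi> n) \<xi> \<le> 0"
    using \<open>0 < c\<close> by (intro approx_exponent_le_0 finite_approx_polys_large_at_self)
  then have "omega n \<xi> \<le> approx_exponent A \<xi>"
    using approx_exponent_mono[OF split, of \<xi>] A_nonneg
    by (simp add: omega_eq_approx_exponent approx_exponent_Un max_def split: if_splits)
  moreover obtain i where "i \<in> G" "approx_exponent A \<xi> = approx_exponent (polys_large_at c (t i) n) \<xi>"
    using approx_exponent_UN[of G] \<open>G \<noteq> {}\<close> \<open>finite I\<close> by (auto simp: A_def G_def)
  ultimately show ?thesis by (auto simp: G_def)
qed

section \<open>Polynomials transformed by a Moebius map\<close>

text \<open>For \<open>deg P \<le> k\<close>, \<open>moebius_poly k r M P\<close> is \<open>(M x)^k P(r + 1/(M x))\<close> and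
  \<open>moebius_poly_inv k r M Q\<close> is \<open>(M (x - r))^k Q(1/(M (x - r)))\<close>; they relate values at \<open>\<xi>\<close>
  and at \<open>1/(M (\<xi> - r))\<close>.\<close>

definition moebius_poly :: "nat \<Rightarrow> int \<Rightarrow> int \<Rightarrow> int poly \<Rightarrow> int poly" where
  "moebius_poly k r M P = (\<Sum>m\<le>k. monom (coeff (pcompose P [:r, 1:]) (k - m) * M ^ m) m)"

definition moebius_poly_inv :: "nat \<Rightarrow> int \<Rightarrow> int \<Rightarrow> int poly \<Rightarrow> int poly" where
  "moebius_poly_inv k r M Q = (\<Sum>m\<le>k. smult (coeff Q m) ([:- M * r, M:] ^ (k - m)))"

lemma degree_shift [simp]: "degree (pcompose P [:r, 1:]) = degree (P :: int poly)"
  using degree_pcompose[of P "[:r, 1:]"] by simp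

lemma coeff_moebius_poly:
  "coeff (moebius_poly k r M P) m = (if m \<le> k then coeff (pcompose P [:r, 1:]) (k - m) * M ^ m else 0)"
  by (simp add: moebius_poly_def coeff_sum coeff_monom)

lemma degree_moebius_poly: "degree (moebius_poly k r M P) \<le> k"
  unfolding moebius_poly_def by (rule degree_sum_le) (auto intro: order.trans[OF degree_monom_le])

lemma degree_moebius_poly_inv: "degree (moebius_poly_inv k r M Q) \<le> k"
  unfolding moebius_poly_inv_def
proof (rule degree_sum_le)
  fix m assume "m \<in> {..k}"
  have "degree ([:- M * r, M:] ^ (k - m)) \<le> 1 * (k - m)"
    by (rule degree_power_le[THEN order.trans]) auto
  then show "degree (smult (coeff Q m) ([:- M * r, M:] ^ (k - m))) \<le> k"
    using degree_smult_le order_trans by fastforce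
qed simp

lemma ipoly_moebius_poly:
  assumes "degree P \<le> k" "M \<noteq> 0" "x \<noteq> real_of_int r"
  shows "ipoly (moebius_poly k r M P) (1 / (M * (x - r))) = ipoly P x / (x - r) ^ k"
proof -
  define d where "d = x - r"
  have "d \<noteq> 0" using assms(3) by (simp add: d_def)
  define A where "A = pcompose P [:r, 1:]"
  have "ipoly (moebius_poly k r M P) (1 / (M * d)) =
      (\<Sum>m\<le>k. real_of_int (coeff A (k - m) * M ^ m) * (1 / (M * d)) ^ m)"
    by (simp add: ipoly_altdef[OF degree_moebius_poly] coeff_moebius_poly A_def)
  also have "\<dots> = (\<Sum>m\<le>k. real_of_int (coeff A (k - m)) * d ^ (k - m)) / d ^ k"
    unfolding sum_divide_distrib
  proof (rule sum.cong[OF refl])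
    fix m assume "m \<in> {..k}"
    then have "d ^ k = d ^ (k - m) * d ^ m" by (simp flip: power_add)
    then show "real_of_int (coeff A (k - m) * M ^ m) * (1 / (M * d)) ^ m =
        real_of_int (coeff A (k - m)) * d ^ (k - m) / d ^ k"
      using assms(2) \<open>d \<noteq> 0\<close> by (simp add: power_divide power_mult_distrib field_simps)
  qed
  also have "(\<Sum>m\<le>k. real_of_int (coeff A (k - m)) * d ^ (k - m)) =
      (\<Sum>j\<le>k. real_of_int (coeff A j) * d ^ j)"
    by (rule sum.reindex_bij_witness[of _ "\<lambda>j. k - j" "\<lambda>j. k - j"]) auto
  also have "\<dots> = ipoly P x"
    using assms(1) by (simp flip: ipoly_altdef add: A_def d_def)
  finally show ?thesis by (simp add: d_def)
qed

lemma ipoly_moebius_poly_inv: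
  assumes "degree Q \<le> k" "M \<noteq> 0" "x \<noteq> real_of_int r"
  shows "ipoly (moebius_poly_inv k r M Q) x = (M * (x - r)) ^ k * ipoly Q (1 / (M * (x - r)))"
proof -
  define e where "e = M * (x - r)"
  have "e \<noteq> 0" using assms(2,3) by (simp add: e_def)
  have "ipoly (moebius_poly_inv k r M Q) x = (\<Sum>m\<le>k. real_of_int (coeff Q m) * e ^ (k - m))"
    by (simp add: moebius_poly_inv_def e_def algebra_simps)
  also have "\<dots> = e ^ k * (\<Sum>m\<le>k. real_of_int (coeff Q m) * (1 / e) ^ m)"
    unfolding sum_distrib_left
  proof (rule sum.cong[OF refl])
    fix m assume "m \<in> {..k}"
    then have "e ^ k = e ^ (k - m) * e ^ m" by (simp flip: power_add)
    then show "real_of_int (coeff Q m) * e ^ (k - m) = e ^ k * (real_of_int (coeff Q m) * (1 / e) ^ m)"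
      using \<open>e \<noteq> 0\<close> by (simp add: power_divide field_simps)
  qed
  also have "\<dots> = e ^ k * ipoly Q (1 / e)" by (simp add: ipoly_altdef[OF assms(1)])
  finally show ?thesis by (simp add: e_def)
qed

lemma moebius_poly_inv_moebius_poly:
  assumes "degree P \<le> k" "M \<noteq> 0"
  shows "moebius_poly_inv k r M (moebius_poly k r M P) = smult (M ^ k) P"
proof (rule int_poly_eqI)
  fix x assume "x \<noteq> real_of_int r"
  then show "ipoly (moebius_poly_inv k r M (moebius_poly k r M P)) x = ipoly (smult (M ^ k) P) x"
    using assms
    by (simp add: ipoly_moebius_poly_inv degree_moebius_poly ipoly_moebius_poly power_mult_distrib)
qed

lemma moebius_poly_moebius_poly_inv:
  assumes "degree Q \<le> k" "M \<noteq> 0"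
  shows "moebius_poly k r M (moebius_poly_inv k r M Q) = smult (M ^ k) Q"
proof (rule int_poly_eqI)
  fix y :: real assume "y \<noteq> 0"
  define x where "x = r + 1 / (M * y)"
  have "x \<noteq> r" "y = 1 / (M * (x - r))" using \<open>y \<noteq> 0\<close> assms(2) by (simp_all add: x_def)
  then show "ipoly (moebius_poly k r M (moebius_poly_inv k r M Q)) y = ipoly (smult (M ^ k) Q) y"
    using assms
    by (simp add: ipoly_moebius_poly degree_moebius_poly_inv ipoly_moebius_poly_inv power_mult_distrib)
qed

lemma inj_on_moebius_poly:
  assumes "M \<noteq> 0"
  shows "inj_on (moebius_poly k r M) {P. degree P \<le> k}"
proof (rule inj_onI)
  fix P Q assume "P \<in> {P. degree P \<le> k}" "Q \<in> {P. degree P \<le> k}"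
    and eq: "moebius_poly k r M P = moebius_poly k r M Q"
  then have "degree P \<le> k" "degree Q \<le> k" by simp_all
  have "smult (M ^ k) P = moebius_poly_inv k r M (moebius_poly k r M P)"
    by (rule moebius_poly_inv_moebius_poly[OF \<open>degree P \<le> k\<close> assms, symmetric])
  also have "\<dots> = smult (M ^ k) Q"
    by (simp only: eq moebius_poly_inv_moebius_poly[OF \<open>degree Q \<le> k\<close> assms])
  finally show "P = Q"
    by (rule smult_cancel[rotated]) (use assms in simp)
qed

lemma inj_on_moebius_poly_inv:
  assumes "M \<noteq> 0"
  shows "inj_on (moebius_poly_inv k r M) {P. degree P \<le> k}"
proof (rule inj_onI)
  fix P Q assume "P \<in> {P. degree P \<le> k}" "Q \<in> {P. degree P \<le> k}"
    and eq: "moebius_poly_inv k r M P = moebius_poly_inv k r M Q"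
  then have "degree P \<le> k" "degree Q \<le> k" by simp_all
  have "smult (M ^ k) P = moebius_poly k r M (moebius_poly_inv k r M P)"
    by (rule moebius_poly_moebius_poly_inv[OF \<open>degree P \<le> k\<close> assms, symmetric])
  also have "\<dots> = smult (M ^ k) Q"
    by (simp only: eq moebius_poly_moebius_poly_inv[OF \<open>degree Q \<le> k\<close> assms])
  finally show "P = Q"
    by (rule smult_cancel[rotated]) (use assms in simp)
qed

lemma sum_hgt_powers_ge_1: "1 \<le> (\<Sum>j\<le>k. hgt (q ^ j))"
  using member_le_sum[of 0 "{..k}" "\<lambda>j. hgt (q ^ j)"] hgt_nonneg by simp

lemma hgt_moebius_poly_le:
  assumes "M \<noteq> 0"
  shows "hgt (moebius_poly k r M P) \<le> \<bar>M\<bar> ^ k * hgt (pcompose P [:r, 1:])"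
proof (rule hgt_le)
  fix m
  show "\<bar>coeff (moebius_poly k r M P) m\<bar> \<le> \<bar>M\<bar> ^ k * hgt (pcompose P [:r, 1:])"
  proof (cases "m \<le> k")
    case True
    have "\<bar>M\<bar> ^ m \<le> \<bar>M\<bar> ^ k" using True assms by (intro power_increasing) auto
    then show ?thesis
      using True abs_coeff_le_hgt[of "pcompose P [:r, 1:]" "k - m"]
      by (simp add: coeff_moebius_poly abs_mult power_abs mult_mono mult.commute)
  qed (simp add: coeff_moebius_poly hgt_nonneg)
qed

lemma hgt_moebius_poly_inv_le:
  "hgt (moebius_poly_inv k r M Q) \<le> hgt Q * (\<Sum>j\<le>k. hgt ([:- M * r, M:] ^ j))"
proof -
  have "hgt (moebius_poly_inv k r M Q) \<le> (\<Sum>m\<le>k. \<bar>coeff Q m\<bar> * hgt ([:- M * r, M:] ^ (k - m)))"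
    unfolding moebius_poly_inv_def using hgt_sum_le by (rule order_trans) simp
  also have "\<dots> \<le> (\<Sum>m\<le>k. hgt Q * hgt ([:- M * r, M:] ^ (k - m)))"
    by (intro sum_mono mult_right_mono abs_coeff_le_hgt hgt_nonneg)
  also have "\<dots> = hgt Q * (\<Sum>m\<le>k. hgt ([:- M * r, M:] ^ (k - m)))"
    by (simp add: sum_distrib_left)
  also have "(\<Sum>m\<le>k. hgt ([:- M * r, M:] ^ (k - m))) = (\<Sum>j\<le>k. hgt ([:- M * r, M:] ^ j))"
    by (rule sum.reindex_bij_witness[of _ "\<lambda>j. k - j" "\<lambda>j. k - j"]) auto
  finally show ?thesis .
qed

lemma moebius_poly_hgt_comparable:
  assumes "M \<noteq> 0"
  obtains a b :: real where "0 < a"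
    "\<And>P. degree P \<le> k \<Longrightarrow> a * hgt P \<le> hgt (moebius_poly k r M P) \<and> hgt (moebius_poly k r M P) \<le> b * hgt P"
proof -
  define S where "S = (\<Sum>j\<le>k. hgt ([:r, 1:] ^ j))"
  define E where "E = (\<Sum>j\<le>k. hgt ([:- M * r, M:] ^ j))"
  have "1 \<le> E" unfolding E_def by (rule sum_hgt_powers_ge_1)
  have "real_of_int \<bar>M\<bar> ^ k / E * hgt P \<le> hgt (moebius_poly k r M P)" if P: "degree P \<le> k" for P
  proof -
    have "\<bar>M\<bar> ^ k * hgt P = hgt (moebius_poly_inv k r M (moebius_poly k r M P))"
      using assms P by (simp add: moebius_poly_inv_moebius_poly power_abs)
    also have "\<dots> \<le> hgt (moebius_poly k r M P) * E"
      unfolding E_def by (rule hgt_moebius_poly_inv_le)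
    finally have "real_of_int (\<bar>M\<bar> ^ k * hgt P) \<le> real_of_int (hgt (moebius_poly k r M P) * E)"
      by (simp only: of_int_le_iff)
    then show ?thesis using \<open>1 \<le> E\<close> by (simp add: field_simps)
  qed
  moreover have "hgt (moebius_poly k r M P) \<le> \<bar>M\<bar> ^ k * S * hgt P" if P: "degree P \<le> k" for P
  proof -
    have "hgt (moebius_poly k r M P) \<le> \<bar>M\<bar> ^ k * hgt (pcompose P [:r, 1:])"
      using assms by (rule hgt_moebius_poly_le)
    also have "\<dots> \<le> \<bar>M\<bar> ^ k * (hgt P * S)"
      unfolding S_def by (intro mult_left_mono hgt_pcompose_le[OF P]) simp
    finally show ?thesis by (simp add: mult_ac)
  qed
  moreover have "0 < real_of_int \<bar>M\<bar> ^ k / E" using assms \<open>1 \<le> E\<close> by simp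
  ultimately show thesis
    using that[of "real_of_int \<bar>M\<bar> ^ k / E" "real_of_int (\<bar>M\<bar> ^ k * S)"] by (simp only: of_int_le_iff flip: of_int_mult)
qed


lemma moebius_poly_inv_hgt_comparable:
  assumes "M \<noteq> 0"
  obtains a b :: real where "0 < a"
    "\<And>Q. degree Q \<le> k \<Longrightarrow>
      a * hgt Q \<le> hgt (moebius_poly_inv k r M Q) \<and> hgt (moebius_poly_inv k r M Q) \<le> b * hgt Q"
proof -
  define S where "S = (\<Sum>j\<le>k. hgt ([:r, 1:] ^ j))"
  define E where "E = (\<Sum>j\<le>k. hgt ([:- M * r, M:] ^ j))"
  have "1 \<le> S" unfolding S_def by (rule sum_hgt_powers_ge_1)
  have "1 / S * hgt Q \<le> hgt (moebius_poly_inv k r M Q)" if Q: "degree Q \<le> k" for Q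
  proof -
    have "\<bar>M\<bar> ^ k * hgt Q = hgt (moebius_poly k r M (moebius_poly_inv k r M Q))"
      using assms Q by (simp add: moebius_poly_moebius_poly_inv power_abs)
    also have "\<dots> \<le> \<bar>M\<bar> ^ k * hgt (pcompose (moebius_poly_inv k r M Q) [:r, 1:])"
      using assms by (rule hgt_moebius_poly_le)
    also have "\<dots> \<le> \<bar>M\<bar> ^ k * (hgt (moebius_poly_inv k r M Q) * S)"
      unfolding S_def by (intro mult_left_mono hgt_pcompose_le degree_moebius_poly_inv) simp
    finally have "hgt Q \<le> hgt (moebius_poly_inv k r M Q) * S"
      using assms by simp
    then have "real_of_int (hgt Q) \<le> hgt (moebius_poly_inv k r M Q) * real_of_int S"
      by (simp only: of_int_le_iff flip: of_int_mult)
    then show ?thesis using \<open>1 \<le> S\<close> by (simp add: field_simps)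
  qed
  moreover have "hgt (moebius_poly_inv k r M Q) \<le> E * hgt Q" for Q
    using hgt_moebius_poly_inv_le[of k r M Q] by (simp add: E_def mult.commute)
  moreover have "0 < 1 / real_of_int S" using \<open>1 \<le> S\<close> by simp
  ultimately show thesis
    using that[of "1 / real_of_int S" "real_of_int E"] by (simp only: of_int_le_iff flip: of_int_mult)
qed

text \<open>The constant term \<open>P(r)\<close> of the shifted polynomial becomes the coefficient of \<open>x^k\<close>,
  multiplied by \<open>M^k\<close>, while every other coefficient is multiplied by at most \<open>M^(k-1)\<close>.\<close>

lemma abs_coeff_moebius_poly_eq_hgt:
  fixes c :: real
  assumes "1 \<le> M" "0 \<le> c" "c * hgt P \<le> \<bar>ipoly P r\<bar>"
    and shift: "hgt (pcompose P [:r, 1:]) \<le> c * M * hgt P"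
  shows "\<bar>coeff (moebius_poly k r M P) k\<bar> = hgt (moebius_poly k r M P)"
proof (rule antisym[OF abs_coeff_le_hgt hgt_le])
  fix m
  have lead: "\<bar>real_of_int (coeff (moebius_poly k r M P) k)\<bar> = \<bar>ipoly P r\<bar> * real_of_int M ^ k"
    using assms(1) by (simp add: coeff_moebius_poly ipoly_of_int abs_mult)
  show "\<bar>coeff (moebius_poly k r M P) m\<bar> \<le> \<bar>coeff (moebius_poly k r M P) k\<bar>"
  proof (cases "m < k")
    case True
    have "\<bar>real_of_int (coeff (moebius_poly k r M P) m)\<bar> =
        \<bar>coeff (pcompose P [:r, 1:]) (k - m)\<bar> * real_of_int M ^ m"
      using True assms(1) by (simp add: coeff_moebius_poly abs_mult)
    also have "\<dots> \<le> c * M * hgt P * real_of_int M ^ m"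
    proof (rule mult_right_mono)
      show "real_of_int \<bar>coeff (pcompose P [:r, 1:]) (k - m)\<bar> \<le> c * M * hgt P"
        using abs_coeff_le_hgt[of "pcompose P [:r, 1:]" "k - m"] shift by linarith
    qed (use assms(1) in simp)
    also have "\<dots> = c * hgt P * real_of_int M ^ Suc m" by (simp add: mult_ac)
    also have "\<dots> \<le> c * hgt P * real_of_int M ^ k"
      using True assms(1,2) hgt_nonneg[of P] by (intro mult_left_mono power_increasing) auto
    also have "\<dots> \<le> \<bar>ipoly P r\<bar> * real_of_int M ^ k"
      using assms(1,3) by (intro mult_right_mono) auto
    finally show ?thesis using lead by linarith
  qed (auto simp: coeff_moebius_poly)
qed


lemma moebius_poly_inv_0 [simp]: "moebius_poly_inv k r M 0 = 0"
  by (simp add: moebius_poly_inv_def)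

lemma moebius_poly_0 [simp]: "moebius_poly k r M 0 = 0"
  by (simp add: moebius_poly_def)

lemma moebius_poly_eq_0_iff:
  assumes "degree P \<le> k" "M \<noteq> 0"
  shows "moebius_poly k r M P = 0 \<longleftrightarrow> P = 0"
proof
  assume "moebius_poly k r M P = 0"
  then have "smult (M ^ k) P = 0"
    by (simp flip: moebius_poly_inv_moebius_poly[OF assms, of r])
  then show "P = 0" using assms(2) by simp
qed simp

lemma moebius_poly_inv_eq_0_iff:
  assumes "degree Q \<le> k" "M \<noteq> 0"
  shows "moebius_poly_inv k r M Q = 0 \<longleftrightarrow> Q = 0"
proof
  assume "moebius_poly_inv k r M Q = 0"
  then have "smult (M ^ k) Q = 0"
    by (simp flip: moebius_poly_moebius_poly_inv[OF assms, of r])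
  then show "Q = 0" using assms(2) by simp
qed simp

section \<open>Transfer of approximation exponents\<close>

lemma approx_exponent_large_at_le_omega_lead:
  fixes r M :: int and c \<xi> :: real
  assumes "1 \<le> M" "\<xi> \<noteq> r" "0 \<le> c"
    and shift: "\<And>P. degree P \<le> k \<Longrightarrow> hgt (pcompose P [:r, 1:]) \<le> c * M * hgt P"
  shows "approx_exponent (polys_large_at c r k) \<xi> \<le> omega_lead k (1 / (M * (\<xi> - r)))"
proof -
  have "M \<noteq> 0" using assms(1) by simp
  obtain a b :: real where "0 < a" and hgt: "\<And>P. degree P \<le> k \<Longrightarrow>
      a * hgt P \<le> hgt (moebius_poly k r M P) \<and> hgt (moebius_poly k r M P) \<le> b * hgt P"
    using moebius_poly_hgt_comparable[OF \<open>M \<noteq> 0\<close>, of k r] by blast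
  have large: "polys_large_at c r k \<subseteq> polys_upto k"
    by (auto simp: polys_large_at_def)
  have maps: "moebius_poly k r M ` polys_large_at c r k \<subseteq> {Q \<in> polys_upto k. \<bar>coeff Q k\<bar> = hgt Q}"
  proof clarify
    fix P assume P: "P \<in> polys_large_at c r k"
    then have "P \<noteq> 0" "degree P \<le> k" "c * hgt P \<le> \<bar>ipoly P r\<bar>"
      by (auto simp: polys_large_at_def polys_upto_def)
    then show "moebius_poly k r M P \<in> polys_upto k \<and>
        \<bar>coeff (moebius_poly k r M P) k\<bar> = hgt (moebius_poly k r M P)"
      using \<open>M \<noteq> 0\<close> abs_coeff_moebius_poly_eq_hgt[OF assms(1,3) _ shift]
      by (simp add: polys_upto_def moebius_poly_eq_0_iff degree_moebius_poly)
  qed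
  show ?thesis unfolding omega_lead_eq_approx_exponent
  proof (rule approx_exponent_le_transfer[where f = "moebius_poly k r M" and n = k and a = a and b = b
        and K = "1 / \<bar>\<xi> - r\<bar> ^ k", OF _ maps large _ \<open>0 < a\<close>])
    show "inj_on (moebius_poly k r M) (polys_large_at c r k)"
      using inj_on_moebius_poly[OF \<open>M \<noteq> 0\<close>] by (rule inj_on_subset) (use large in \<open>auto simp: polys_upto_def\<close>)
    fix P assume "P \<in> polys_large_at c r k"
    then have "degree P \<le> k" using large by (auto simp: polys_upto_def)
    then show "a * hgt P \<le> hgt (moebius_poly k r M P) \<and> hgt (moebius_poly k r M P) \<le> b * hgt P"
      by (rule hgt)
    show "\<bar>ipoly (moebius_poly k r M P) (1 / (M * (\<xi> - r)))\<bar> \<le> 1 / \<bar>\<xi> - r\<bar> ^ k * \<bar>ipoly P \<xi>\<bar>"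
      using ipoly_moebius_poly[OF \<open>degree P \<le> k\<close> \<open>M \<noteq> 0\<close> assms(2)] by (simp add: abs_divide power_abs)
  qed (auto simp: polys_upto_def)
qed

lemma omega_moebius_le:
  fixes r M :: int and \<xi> :: real
  assumes "M \<noteq> 0" "\<xi> \<noteq> r"
  shows "omega k (1 / (M * (\<xi> - r))) \<le> omega k \<xi>"
proof -
  obtain a b :: real where "0 < a" and hgt: "\<And>Q. degree Q \<le> k \<Longrightarrow>
      a * hgt Q \<le> hgt (moebius_poly_inv k r M Q) \<and> hgt (moebius_poly_inv k r M Q) \<le> b * hgt Q"
    using moebius_poly_inv_hgt_comparable[OF assms(1), of k r] by blast
  have maps: "moebius_poly_inv k r M ` polys_upto k \<subseteq> polys_upto k"
    using assms(1) by (auto simp: polys_upto_def moebius_poly_inv_eq_0_iff degree_moebius_poly_inv)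
  show ?thesis unfolding omega_eq_approx_exponent
  proof (rule approx_exponent_le_transfer[where f = "moebius_poly_inv k r M" and n = k and a = a and b = b
        and K = "\<bar>M * (\<xi> - r)\<bar> ^ k", OF _ maps order_refl order_refl \<open>0 < a\<close>])
    show "inj_on (moebius_poly_inv k r M) (polys_upto k)"
      using inj_on_moebius_poly_inv[OF assms(1)] by (rule inj_on_subset) (auto simp: polys_upto_def)
    fix Q assume "Q \<in> polys_upto k"
    then have "degree Q \<le> k" by (simp add: polys_upto_def)
    then show "a * hgt Q \<le> hgt (moebius_poly_inv k r M Q) \<and> hgt (moebius_poly_inv k r M Q) \<le> b * hgt Q"
      by (rule hgt)
    show "\<bar>ipoly (moebius_poly_inv k r M Q) \<xi>\<bar> \<le> \<bar>M * (\<xi> - r)\<bar> ^ k * \<bar>ipoly Q (1 / (M * (\<xi> - r)))\<bar>"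
      using ipoly_moebius_poly_inv[OF \<open>degree Q \<le> k\<close> assms] by (simp add: abs_mult power_abs)
  qed simp
qed


lemma hgt_shift_le_uniform:
  fixes r :: "'i \<Rightarrow> int"
  assumes "finite I"
  obtains D :: real
  where "\<And>i (P :: int poly). i \<in> I \<Longrightarrow> degree P \<le> k \<Longrightarrow> hgt (pcompose P [:r i, 1:]) \<le> D * hgt P"
proof
  fix i and P :: "int poly" assume "i \<in> I" "degree P \<le> k"
  have "hgt (pcompose P [:r i, 1:]) \<le> hgt P * (\<Sum>j\<le>k. hgt ([:r i, 1:] ^ j))"
    using \<open>degree P \<le> k\<close> by (rule hgt_pcompose_le)
  also have "\<dots> \<le> hgt P * (\<Sum>i\<in>I. \<Sum>j\<le>k. hgt ([:r i, 1:] ^ j))"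
    using \<open>i \<in> I\<close> assms by (intro mult_left_mono member_le_sum sum_nonneg hgt_nonneg)
  finally show "hgt (pcompose P [:r i, 1:]) \<le> real_of_int (\<Sum>i\<in>I. \<Sum>j\<le>k. hgt ([:r i, 1:] ^ j)) * hgt P"
    by (simp only: of_int_le_iff mult.commute flip: of_int_mult)
qed

lemma omega_lead_eq_omega_at_some_node:
  fixes r :: "'i \<Rightarrow> int" and c \<xi> :: real and M :: int
  assumes "1 \<le> k" "finite I" "0 < c" "1 \<le> M"
    and cover: "\<And>P. P \<in> polys_upto k \<Longrightarrow> \<exists>i\<in>I. c * hgt P \<le> \<bar>ipoly P (r i)\<bar>"
    and shift: "\<And>i P. i \<in> I \<Longrightarrow> degree P \<le> k \<Longrightarrow> hgt (pcompose P [:r i, 1:]) \<le> c * M * hgt P"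
  shows "\<exists>i\<in>I. real_of_int (r i) \<noteq> \<xi> \<and>
    omega_lead k (1 / (M * (\<xi> - r i))) = omega k (1 / (M * (\<xi> - r i))) \<and>
    omega k (1 / (M * (\<xi> - r i))) = omega k \<xi>"
proof -
  obtain i where i: "i \<in> I" "r i \<noteq> \<xi>"
    and "omega k \<xi> \<le> approx_exponent (polys_large_at c (r i) k) \<xi>"
    using exists_node_omega_le_approx_exponent[OF assms(1-3) cover] by blast
  define \<eta> where "\<eta> = 1 / (M * (\<xi> - r i))"
  note \<open>omega k \<xi> \<le> approx_exponent (polys_large_at c (r i) k) \<xi>\<close>
  also have "approx_exponent (polys_large_at c (r i) k) \<xi> \<le> omega_lead k \<eta>"
    unfolding \<eta>_def using assms(3,4) i shift by (intro approx_exponent_large_at_le_omega_lead) auto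
  finally have "omega k \<xi> \<le> omega_lead k \<eta>" .
  moreover have "omega_lead k \<eta> \<le> omega k \<eta>" by (rule omega_lead_le_omega)
  moreover have "omega k \<eta> \<le> omega k \<xi>"
    unfolding \<eta>_def using assms(4) i by (intro omega_moebius_le) auto
  ultimately have "omega_lead k \<eta> = omega k \<eta>" "omega k \<eta> = omega k \<xi>" by order+
  then show ?thesis using i unfolding \<eta>_def by blast
qed

theorem mainTheorem1:
  fixes k :: nat and r :: "nat \<Rightarrow> int"
  assumes "k \<ge> 1"
    and "inj_on r {0..k}"
  shows "\<exists>M :: int. M \<ge> 1 \<and> (\<forall>\<xi> :: real. \<exists>i \<in> {0..k}. real_of_int (r i) \<noteq> \<xi> \<and>
           omega_lead k (1 / (real_of_int M * (\<xi> - real_of_int (r i)))) =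
             omega k (1 / (real_of_int M * (\<xi> - real_of_int (r i)))) \<and>
           omega k (1 / (real_of_int M * (\<xi> - real_of_int (r i)))) = omega k \<xi>)"
proof -
  define T where "T = (\<lambda>i. real_of_int (r i)) ` {0..k}"
  have "card T = Suc k"
    using assms(2) by (simp add: T_def card_image inj_on_def)
  have "finite T" "T \<noteq> {}" by (auto simp: T_def)
  then obtain c :: real where "c > 0" and "\<And>P. degree P < card T \<Longrightarrow> \<exists>t\<in>T. c * hgt P \<le> \<bar>ipoly P t\<bar>"
    by (rule exists_node_large_value) blast
  then have cover: "\<exists>i\<in>{0..k}. c * hgt P \<le> \<bar>ipoly P (r i)\<bar>" if "P \<in> polys_upto k" for P
    using that \<open>card T = Suc k\<close> by (force simp: T_def polys_upto_def)
  obtain D :: real where D: "\<And>i P. i \<in> {0..k} \<Longrightarrow> degree P \<le> k \<Longrightarrow> hgt (pcompose P [:r i, 1:]) \<le> D * hgt P"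
    by (rule hgt_shift_le_uniform[where I = "{0..k}" and k = k and r = r]) auto
  define M where "M = max 1 \<lceil>D / c\<rceil>"
  have "1 \<le> M" by (simp add: M_def)
  have "D / c \<le> M"
    unfolding M_def by (rule order_trans[OF le_of_int_ceiling]) simp
  then have DM: "D * hgt P \<le> c * M * hgt P" for P
    using \<open>c > 0\<close> hgt_nonneg[of P] by (intro mult_right_mono) (simp_all add: divide_le_eq mult.commute)
  have shift: "hgt (pcompose P [:r i, 1:]) \<le> c * M * hgt P" if "i \<in> {0..k}" "degree P \<le> k" for i P
    using D[OF that] DM by (rule order_trans)
  show ?thesis
    by (intro exI[of _ M] conjI allI \<open>1 \<le> M\<close> omega_lead_eq_omega_at_some_node[where I = "{0..k}"])
      (use assms(1) \<open>c > 0\<close> \<open>1 \<le> M\<close> cover shift in auto)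
qed

end
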